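(* Let $d\in\mathbb{N}^*$ and $M\in\mathbb{N}^*$. There exists a feed-forward neural network architecture $\mathcal{A}$ with $d$ input neurons, two hidden layers, $2(d+1)^2M$ weights and the Heaviside activation function, such that for any $(\alpha_i)_{1\le i\le M}\in\mathbb{R}^M$ and any collection $(\mathcal{C}_i)_{1\le i\le M}$ of mutually disjoint hypercubes of $\mathbb{R}^d$, the function $\tilde f:\mathbb{R}^d\to\mathbb{R}$ defined by $\tilde f(x)=\sum_{i=1}^M\alpha_i\mathds{1}_{\mathcal{C}_i}(x)$ belongs to $H_{\mathcal{A}}$.
   Context: A hypercube here is a cube in $\mathbb{R}^d$ with nonempty interior, bounded by $2d$ faces supported by hyperplanes, where each face may or may not belong to the cube (i.e. it is an intersection of $2d$ half-spaces $\{\langle \mathbf w_j,x\rangle+b_j\ge0\}$ or $\{\langle \mathbf w_j,x\rangle+b_j>0\}$ forming a cube). Heaviside activation: $\sigma(x)=\mathds{1}_{x\ge0}$. A feed-forward architecture is a directed acyclic graph with $d$ input nodes (in-degree $0$), a single output node (out-degree $0$); layer $0$ is the inputs, layer $\ell$ consists of nodes having a predecessor in layer $\ell-1$ and other predecessors only in earlier layers; intermediate layers are hidden layers. A real weight is attached to every edge and every non-input node; the number of weights is their total number. For weights $\mathbf w$, input neuron $v$ outputs $x_v$, each hidden neuron outputs $\sigma(\sum_{u\in P_v}w_{u\to v}y_u+w_v)$ ($P_v$ = predecessors), the output neuron outputs $\sum_{u\in P_v}w_{u\to v}y_u+w_v$; $H_{\mathcal{A}}$ is the set of all functions $\mathbb{R}^d\to\mathbb{R}$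 so computed over all weight vectors. *)

theory Defs
  imports "HOL-Analysis.Analysis"
begin

definition heaviside :: "real \<Rightarrow> real" where
  "heaviside t = (if t \<ge> 0 then 1 else 0)"

text \<open>Hypercubes of R^d (d = CARD('n)): a (possibly rotated) cube with centre c,
  orthonormal face normals u j, half side length r > 0; each of the 2d faces is
  either included (closed half-space) or excluded (open half-space).\<close>
definition hypercube :: "(real^'n) set \<Rightarrow> bool" where
  "hypercube C \<longleftrightarrow>
     (\<exists>(c::real^'n) (u::'n \<Rightarrow> real^'n) (r::real) (lo::'n \<Rightarrow> bool) (hi::'n \<Rightarrow> bool).
        r > 0 \<and> (\<forall>i j. u i \<bullet> u j = (if i = j then 1 else 0)) \<and>
        C = {x. \<forall>j. (if lo j then - r \<le> (x - c) \<bullet> u j else - r < (x - c) \<bullet> u j) \<and>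
                     (if hi j then (x - c) \<bullet> u j \<le> r else (x - c) \<bullet> u j < r)})"

text \<open>Architectures: nodes are of type 'n + nat; the input neurons are exactly the
  nodes Inl i (input Inl i reads coordinate i), which are exactly the nodes of in-degree 0.\<close>
type_synonym 'n node = "'n + nat"
type_synonym 'n arch = "'n node set \<times> ('n node \<times> 'n node) set"

definition valid_arch :: "'n arch \<Rightarrow> bool" where
  "valid_arch A \<longleftrightarrow> (case A of (V, E) \<Rightarrow>
      finite V \<and> E \<subseteq> V \<times> V \<and> range Inl \<subseteq> V \<and>
      (\<forall>v\<in>V. (\<not> (\<exists>u. (u, v) \<in> E)) \<longleftrightarrow> v \<in> range Inl) \<and>
      acyclic E \<and>
      (\<exists>!ov. ov \<in> V \<and> (\<forall>w. (ov, w) \<notin> E)))"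

definition out_node :: "'n arch \<Rightarrow> 'n node" where
  "out_node A = (THE ov. ov \<in> fst A \<and> (\<forall>w. (ov, w) \<notin> snd A))"

definition layer :: "'n arch \<Rightarrow> 'n node \<Rightarrow> nat" where
  "layer A v = Max {n. \<exists>u. (u, v) \<in> snd A ^^ n}"

definition num_hidden_layers :: "'n arch \<Rightarrow> nat" where
  "num_hidden_layers A = card (layer A ` fst A - {0, layer A (out_node A)})"

text \<open>One weight per edge and one (bias) per non-input node.\<close>
definition num_weights :: "'n arch \<Rightarrow> nat" where
  "num_weights A = card (snd A) + card (fst A - range Inl)"

definition preds :: "'n arch \<Rightarrow> 'n node \<Rightarrow> 'n node set" where
  "preds A v = {u \<in> fst A. (u, v) \<in> snd A}"

text \<open>Neuron outputs, computed with a fuel parameter (card V suffices in a DAG).\<close>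
fun nval :: "nat \<Rightarrow> 'n arch \<Rightarrow> ('n node \<times> 'n node \<Rightarrow> real) \<Rightarrow> ('n node \<Rightarrow> real)
              \<Rightarrow> real^'n \<Rightarrow> 'n node \<Rightarrow> real" where
  "nval 0 A w b x v = (case v of Inl i \<Rightarrow> x $ i | Inr _ \<Rightarrow> 0)"
| "nval (Suc k) A w b x v = (case v of Inl i \<Rightarrow> x $ i
     | Inr _ \<Rightarrow> heaviside ((\<Sum>u\<in>preds A v. w (u, v) * nval k A w b x u) + b v))"

definition net_output :: "'n arch \<Rightarrow> ('n node \<times> 'n node \<Rightarrow> real) \<Rightarrow> ('n node \<Rightarrow> real)
                          \<Rightarrow> real^'n \<Rightarrow> real" where
  "net_output A w b x =
     (let ov = out_node A in
       (\<Sum>u\<in>preds A ov. w (u, ov) * nval (card (fst A)) A w b x u) + b ov)"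

definition hclass :: "'n arch \<Rightarrow> (real^'n \<Rightarrow> real) set" where
  "hclass A = {f. \<exists>w b. \<forall>x. f x = net_output A w b x}"

end

(* Block i of the network has one
   Heaviside neuron per face of the i-th cube.  The 2d - 1 first-layer neurons test their face
   directly; the upper face of a fixed direction j0 is instead tested by a second-layer "gate"
   neuron that also reads the inputs.  Its pre-activation is the slack of that face, minus a
   penalty K > 2r per violated face outside direction j0, plus a penalty larger than all of
   these when the lower face of direction j0 is violated.  If that lower face holds, the upper
   slack is at most 2r, so one violation switches the gate off; if it fails, the gate is forced
   on and the output cancels it by subtracting the lower-face neuron.  A block thus costs
   2d^2 + 4d + 1 weights, and with the output bias and M - 1 zero-weight padding edges the
   total is exactly 2 (d + 1)^2 M. *)

theory Submission
  imports Defs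
begin

definition ineq :: "bool \<Rightarrow> real \<Rightarrow> bool" where
  "ineq c a \<longleftrightarrow> (if c then 0 \<le> a else 0 < a)"

definition bsign :: "bool \<Rightarrow> real" where
  "bsign b = (if b then 1 else -1)"

lemma bsign_simps [simp]: "bsign True = 1" "bsign False = -1"
  by (simp_all add: bsign_def)

lemma of_bool_ineq: "of_bool (ineq c a) = bsign c * heaviside (bsign c * a) + of_bool (\<not> c)"
  by (simp add: ineq_def bsign_def heaviside_def)

lemma of_bool_not_ineq: "of_bool (\<not> ineq c a) = of_bool c - bsign c * heaviside (bsign c * a)"
  by (simp add: ineq_def bsign_def heaviside_def)

lemma ineq_gate_iff:
  fixes a b V K K' :: real
  assumes "0 < a + b" "a + b < K" "V = 0 \<or> 1 \<le> V" "K * V \<le> K'"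
  shows "ineq cb (b - K * V + K' * of_bool (\<not> ineq ca a)) \<longleftrightarrow>
           \<not> ineq ca a \<or> (V = 0 \<and> ineq cb b)"
proof (cases "ineq ca a")
  case True
  then have "0 \<le> a" by (auto simp: ineq_def split: if_splits)
  show ?thesis
  proof (cases "V = 0")
    case False
    then have "K \<le> K * V" using assms(1-3) by (simp add: mult_le_cancel_left1)
    then have "b - K * V < 0" using \<open>0 \<le> a\<close> assms(2) by linarith
    then show ?thesis using True False by (auto simp: ineq_def)
  qed (use True in simp)
next
  case False
  then have "a \<le> 0" by (auto simp: ineq_def split: if_splits)
  then show ?thesis using False assms(1,4) by (simp add: ineq_def)
qed

definition cube_set :: "real^'n \<Rightarrow> ('n \<Rightarrow> real^'n) \<Rightarrow> real \<Rightarrow> ('n \<Rightarrow> bool) \<Rightarrow> ('n \<Rightarrow> bool)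
                        \<Rightarrow> (real^'n) set" where
  "cube_set c u r lo hi =
     {x. \<forall>j. (if lo j then - r \<le> (x - c) \<bullet> u j else - r < (x - c) \<bullet> u j) \<and>
            (if hi j then (x - c) \<bullet> u j \<le> r else (x - c) \<bullet> u j < r)}"

lemma hypercube_imp_cube_set: "hypercube C \<Longrightarrow> \<exists>c u r lo hi. 0 < r \<and> C = cube_set c u r lo hi"
  unfolding hypercube_def cube_set_def by blast

lemma hypercube_family_imp_cube_sets:
  assumes "\<forall>i\<in>I. hypercube (C i)"
  shows "\<exists>c u r lo hi. \<forall>i\<in>I. 0 < r i \<and> C i = cube_set (c i) (u i) (r i) (lo i) (hi i)"
proof -
  have "\<forall>i\<in>I. \<exists>c u r lo hi. 0 < r \<and> C i = cube_set c u r lo hi"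
    using assms hypercube_imp_cube_set by blast
  from bchoice[OF this] obtain c
    where "\<forall>i\<in>I. \<exists>u r lo hi. 0 < r \<and> C i = cube_set (c i) u r lo hi" ..
  from bchoice[OF this] obtain u
    where "\<forall>i\<in>I. \<exists>r lo hi. 0 < r \<and> C i = cube_set (c i) (u i) r lo hi" ..
  from bchoice[OF this] obtain r
    where "\<forall>i\<in>I. \<exists>lo hi. 0 < r i \<and> C i = cube_set (c i) (u i) (r i) lo hi" ..
  from bchoice[OF this] obtain lo
    where "\<forall>i\<in>I. \<exists>hi. 0 < r i \<and> C i = cube_set (c i) (u i) (r i) (lo i) hi" ..
  from bchoice[OF this] show ?thesis by blast
qed

text \<open>A face is a pair (j, b): the face with normal u j on the side -r (b = True) or
  +r (b = False).\<close>

definition face_closed :: "('n \<Rightarrow> bool) \<Rightarrow> ('n \<Rightarrow> bool) \<Rightarrow> 'n \<times> bool \<Rightarrow> bool" where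
  "face_closed lo hi q = (if snd q then lo (fst q) else hi (fst q))"

definition face_slack :: "real^'n \<Rightarrow> ('n \<Rightarrow> real^'n) \<Rightarrow> real \<Rightarrow> 'n \<times> bool \<Rightarrow> real^'n \<Rightarrow> real" where
  "face_slack c u r q x = r + bsign (snd q) * ((x - c) \<bullet> u (fst q))"

lemma mem_cube_set_iff:
  "x \<in> cube_set c u r lo hi \<longleftrightarrow> (\<forall>q. ineq (face_closed lo hi q) (face_slack c u r q x))"
  unfolding cube_set_def face_closed_def face_slack_def ineq_def split_paired_All all_bool_eq
  by (simp add: if_bool_eq_conj; smt (verit))

lemma nval_Inl [simp]: "nval f A w b x (Inl l) = x $ l"
  by (cases f) simp_all

lemma sum_Inl_nval: "(\<Sum>u\<in>range Inl. g u * nval f A w b x u) = (\<chi> l. g (Inl l)) \<bullet> x"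
  by (simp add: sum.reindex inner_vec_def)

lemma sum_preds_eq_support:
  fixes g :: "'n node \<Rightarrow> real"
  assumes "finite (fst A)" "S \<subseteq> preds A v" "\<And>u. u \<in> fst A \<Longrightarrow> u \<notin> S \<Longrightarrow> w (u, v) = 0"
  shows "(\<Sum>u\<in>preds A v. w (u, v) * g u) = (\<Sum>u\<in>S. w (u, v) * g u)"
proof (rule sum.mono_neutral_right)
  show "finite (preds A v)" using assms(1) by (simp add: preds_def)
qed (use assms(2,3) in \<open>auto simp: preds_def\<close>)

lemma acyclic_rank: "(\<And>a b. (a, b) \<in> E \<Longrightarrow> rk a < (rk b :: nat)) \<Longrightarrow> acyclic E"
  by (rule wf_acyclic, rule wf_subset[OF wf_inv_image[OF wf_less_than]]) auto

lemma relpow_rank: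
  assumes "\<And>a b. (a, b) \<in> E \<Longrightarrow> rk a < (rk b :: nat)" "(u, v) \<in> E ^^ n"
  shows "rk u + n \<le> rk v"
  using assms(2)
proof (induction n arbitrary: v)
  case (Suc n)
  then obtain w where "(u, w) \<in> E ^^ n" "(w, v) \<in> E" by auto
  with Suc.IH[of w] assms(1)[of w v] show ?case by simp
qed simp

lemma layer_eq_rank:
  assumes "\<And>a b. (a, b) \<in> snd A \<Longrightarrow> rk a < rk b" "(w, v) \<in> snd A ^^ rk v"
  shows "layer A v = rk v"
  unfolding layer_def
proof (rule Max_eqI)
  have "{n. \<exists>u. (u, v) \<in> snd A ^^ n} \<subseteq> {..rk v}"
    using relpow_rank[OF assms(1)] by fastforce
  then show "finite {n. \<exists>u. (u, v) \<in> snd A ^^ n}" by (rule finite_subset) simp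
qed (use assms relpow_rank[OF assms(1)] in fastforce)+

lemma out_node_eqI:
  assumes "valid_arch A" "ov \<in> fst A" "\<And>w. (ov, w) \<notin> snd A"
  shows "out_node A = ov"
  unfolding out_node_def
proof (rule the1_equality)
  show "\<exists>!ov. ov \<in> fst A \<and> (\<forall>w. (ov, w) \<notin> snd A)"
    using assms(1) by (cases A) (simp add: valid_arch_def)
qed (use assms(2,3) in blast)

definition neuron :: "nat \<Rightarrow> 'n \<times> bool \<Rightarrow> 'n::finite node" where
  "neuron i q = Inr (Suc (to_nat (i, q)))"

lemma neuron_eq_iff [simp]: "neuron i q = neuron i' q' \<longleftrightarrow> i = i' \<and> q = q'"
  by (simp add: neuron_def)

lemma neuron_neq [simp]:
  "neuron i q \<noteq> Inl l" "Inl l \<noteq> neuron i q" "neuron i q \<noteq> Inr 0" "Inr 0 \<noteq> neuron i q"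
  by (simp_all add: neuron_def)

definition cube_nodes :: "nat \<Rightarrow> 'n::finite node set" where
  "cube_nodes M = range Inl \<union> {Inr 0} \<union> (\<lambda>(i, q). neuron i q) ` ({1..M} \<times> UNIV)"

text \<open>Block i has one neuron per face of the i-th cube; its neuron of the face (j0, False) is
  the gate, in the second hidden layer, and the others form the first hidden layer. The last
  set consists of edges that only pad the weight count up to 2 (d + 1)^2 M: they get weight 0.\<close>

definition cube_edges :: "nat \<Rightarrow> 'n::finite \<Rightarrow> ('n node \<times> 'n node) set" where
  "cube_edges M j0 =
     (\<lambda>(l, i, q). (Inl l, neuron i q)) ` (UNIV \<times> {1..M} \<times> UNIV) \<union>
     (\<lambda>(i, q). (neuron i q, neuron i (j0, False))) ` ({1..M} \<times> - {(j0, False)}) \<union>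
     (\<lambda>(i, q). (neuron i q, Inr 0)) ` ({1..M} \<times> {(j0, False), (j0, True)}) \<union>
     (\<lambda>i. (neuron i (j0, True), neuron 1 (j0, False))) ` {2..M}"

definition cube_arch :: "nat \<Rightarrow> 'n::finite \<Rightarrow> 'n arch" where
  "cube_arch M j0 = (cube_nodes M, cube_edges M j0)"

lemma input_edge: "i \<in> {1..M} \<Longrightarrow> (Inl l, neuron i q) \<in> cube_edges M j0"
  by (auto simp: cube_edges_def image_iff)

lemma gather_edge:
  "i \<in> {1..M} \<Longrightarrow> q \<noteq> (j0, False) \<Longrightarrow> (neuron i q, neuron i (j0, False)) \<in> cube_edges M j0"
  by (auto simp: cube_edges_def image_iff)

lemma output_edge:
  "i \<in> {1..M} \<Longrightarrow> q \<in> {(j0, False), (j0, True)} \<Longrightarrow> (neuron i q, Inr 0) \<in> cube_edges M j0"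
  by (auto simp: cube_edges_def image_iff)

lemma neuron_mem_cube_nodes: "i \<in> {1..M} \<Longrightarrow> neuron i q \<in> cube_nodes M"
  unfolding cube_nodes_def by blast

definition cube_rank :: "'n::finite \<Rightarrow> 'n node \<Rightarrow> nat" where
  "cube_rank j0 v =
     (if v \<in> range Inl then 0 else if v = Inr 0 then 3
      else if v \<in> range (\<lambda>i. neuron i (j0, False)) then 2 else 1)"

lemma cube_rank_less: "(a, b) \<in> cube_edges M j0 \<Longrightarrow> cube_rank j0 a < cube_rank j0 b"
  unfolding cube_edges_def cube_rank_def by (auto simp: image_iff)

lemma cube_rank_path:
  assumes "M \<ge> 1" "v \<in> cube_nodes M"
  shows "\<exists>w. (w, v) \<in> cube_edges M j0 ^^ cube_rank j0 v"
proof -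
  have M: "1 \<in> {1..M}" using assms(1) by simp
  have path2: "(Inl j0, neuron i (j0, False)) \<in> cube_edges M j0 ^^ 2" if "i \<in> {1..M}" for i
  proof -
    have "(Inl j0, neuron i (j0, True)) \<in> cube_edges M j0 ^^ 1" using input_edge[OF that] by simp
    moreover have "(neuron i (j0, True), neuron i (j0, False)) \<in> cube_edges M j0"
      by (rule gather_edge[OF that]) simp
    ultimately show ?thesis by (simp add: numeral_2_eq_2 del: relpow.simps) (rule relpow_Suc_I)
  qed
  from assms(2) consider l where "v = Inl l" | "v = Inr 0"
    | i where "i \<in> {1..M}" "v = neuron i (j0, False)"
    | i q where "i \<in> {1..M}" "q \<noteq> (j0, False)" "v = neuron i q"
    unfolding cube_nodes_def by (auto, blast)
  then show ?thesis
  proof cases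
    case 2
    have "(neuron 1 (j0, False), Inr 0) \<in> cube_edges M j0" by (rule output_edge[OF M]) simp
    then have "(Inl j0, Inr 0) \<in> cube_edges M j0 ^^ Suc 2"
      using path2[OF M] by (rule relpow_Suc_I[rotated])
    then show ?thesis using 2 by (auto simp: cube_rank_def numeral_3_eq_3)
  next
    case (3 i)
    then show ?thesis using path2 by (auto simp: cube_rank_def)
  next
    case (4 i q)
    then have "(Inl j0, v) \<in> cube_edges M j0 ^^ 1" using input_edge[OF 4(1)] by simp
    then show ?thesis using 4 by (auto simp: cube_rank_def)
  qed (auto simp: cube_rank_def)
qed

lemma cube_edges_subset: "cube_edges M j0 \<subseteq> cube_nodes M \<times> cube_nodes M"
  unfolding cube_edges_def cube_nodes_def by auto

lemma mem_preds_cube_arch: "u \<in> preds (cube_arch M j0) v \<longleftrightarrow> (u, v) \<in> cube_edges M j0"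
  using cube_edges_subset by (auto simp: preds_def cube_arch_def)

lemma cube_edge_into_input: "(u, Inl l) \<notin> cube_edges M j0"
  unfolding cube_edges_def by auto

lemma cube_edge_from_output: "(Inr 0, w) \<notin> cube_edges M j0"
  unfolding cube_edges_def by auto

lemma cube_edge_from_node:
  assumes "M \<ge> 1" "v \<in> cube_nodes M" "v \<noteq> Inr 0"
  shows "\<exists>w. (v, w) \<in> cube_edges M j0"
proof -
  have M: "1 \<in> {1..M}" using assms(1) by simp
  from assms(2,3) consider l where "v = Inl l" | i q where "i \<in> {1..M}" "v = neuron i q"
    unfolding cube_nodes_def by auto
  then show ?thesis
  proof cases
    case 1
    then show ?thesis using input_edge[OF M] by blast
  next
    case (2 i q)
    then show ?thesis
      using gather_edge[OF 2(1), of q j0] output_edge[OF 2(1), of q j0]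
      by (cases "q = (j0, False)") auto
  qed
qed

lemma cube_edge_into_node:
  assumes "M \<ge> 1" "v \<in> cube_nodes M" "v \<notin> range Inl"
  shows "\<exists>u. (u, v) \<in> cube_edges M j0"
proof -
  have M: "1 \<in> {1..M}" using assms(1) by simp
  from assms(2,3) consider "v = Inr 0" | i q where "i \<in> {1..M}" "v = neuron i q"
    unfolding cube_nodes_def by auto
  then show ?thesis
  proof cases
    case 1
    then show ?thesis using output_edge[OF M, of "(j0, False)" j0] by blast
  next
    case (2 i q)
    then show ?thesis using input_edge[OF 2(1)] by blast
  qed
qed

lemma valid_cube_arch: "M \<ge> 1 \<Longrightarrow> valid_arch (cube_arch M j0)"
  unfolding valid_arch_def cube_arch_def split
proof (intro conjI)
  assume M: "M \<ge> 1"
  show "finite (cube_nodes M)" "range Inl \<subseteq> cube_nodes M"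
    by (auto simp: cube_nodes_def)
  show "acyclic (cube_edges M j0)" using cube_rank_less by (rule acyclic_rank)
  show "\<forall>v\<in>cube_nodes M. (\<nexists>u. (u, v) \<in> cube_edges M j0) \<longleftrightarrow> v \<in> range Inl"
    using cube_edge_into_node[OF M] cube_edge_into_input by blast
  show "\<exists>!ov. ov \<in> cube_nodes M \<and> (\<forall>w. (ov, w) \<notin> cube_edges M j0)"
  proof (rule ex1I[of _ "Inr 0"])
    show "Inr 0 \<in> cube_nodes M \<and> (\<forall>w. (Inr 0, w) \<notin> cube_edges M j0)"
      using cube_edge_from_output unfolding cube_nodes_def by blast
  qed (use cube_edge_from_node[OF M] in blast)
qed (rule cube_edges_subset)

lemma out_node_cube_arch: "M \<ge> 1 \<Longrightarrow> out_node (cube_arch M j0) = Inr 0"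
  by (rule out_node_eqI[OF valid_cube_arch])
    (auto simp: cube_arch_def cube_nodes_def cube_edge_from_output)

lemma layer_cube_arch: "M \<ge> 1 \<Longrightarrow> v \<in> cube_nodes M \<Longrightarrow> layer (cube_arch M j0) v = cube_rank j0 v"
  using cube_rank_path[of M v j0] by (auto simp: cube_arch_def cube_rank_less intro: layer_eq_rank)

lemma num_hidden_layers_cube_arch:
  assumes "M \<ge> 1"
  shows "num_hidden_layers (cube_arch M j0) = 2"
proof -
  have M: "1 \<in> {1..M}" using assms by simp
  have "layer (cube_arch M j0) ` fst (cube_arch M j0) = cube_rank j0 ` cube_nodes M"
    by (rule image_cong)
      (simp_all add: cube_arch_def layer_cube_arch[OF assms, unfolded cube_arch_def])
  also have "\<dots> = {0, 1, 2, 3}"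
  proof
    show "cube_rank j0 ` cube_nodes M \<subseteq> {0, 1, 2, 3}" by (auto simp: cube_rank_def)
    let ?witnesses = "{Inl j0, neuron 1 (j0, True), neuron 1 (j0, False), Inr 0}"
    have "{0, 1, 2, 3} = cube_rank j0 ` ?witnesses"
      by (auto simp: cube_rank_def)
    also have "\<dots> \<subseteq> cube_rank j0 ` cube_nodes M"
      using neuron_mem_cube_nodes[OF M] by (intro image_mono) (auto simp: cube_nodes_def)
    finally show "{0, 1, 2, 3} \<subseteq> cube_rank j0 ` cube_nodes M" .
  qed
  moreover have "layer (cube_arch M j0) (out_node (cube_arch M j0)) = 3"
    using layer_cube_arch[OF assms, of "Inr 0" j0]
    by (simp add: out_node_cube_arch[OF assms] cube_nodes_def cube_rank_def image_iff)
  ultimately show ?thesis by (simp add: num_hidden_layers_def)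
qed

lemma card_cube_edges:
  "card (cube_edges M j0 :: ('n::finite node \<times> _) set) =
     CARD('n) * M * (2 * CARD('n)) + M * (2 * CARD('n) - 1) + 2 * M + (M - 1)"
proof -
  let ?inputs = "(\<lambda>(l, i, q). (Inl l, neuron i q)) ` (UNIV \<times> {1..M} \<times> UNIV)
                 :: ('n node \<times> 'n node) set"
  let ?gather = "(\<lambda>(i, q). (neuron i q, neuron i (j0, False))) ` ({1..M} \<times> - {(j0, False)})"
  let ?output = "(\<lambda>(i, q). (neuron i q, Inr 0)) ` ({1..M} \<times> {(j0, False), (j0, True)})
                 :: ('n node \<times> 'n node) set"
  let ?padding = "(\<lambda>i. (neuron i (j0, True), neuron 1 (j0, False))) ` {2..M}"
  have "?inputs \<inter> ?gather = {}" "?inputs \<inter> ?output = {}" "?inputs \<inter> ?padding = {}"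
    "?gather \<inter> ?output = {}" "?gather \<inter> ?padding = {}" "?output \<inter> ?padding = {}"
    by auto
  then have "card (cube_edges M j0) = card ?inputs + card ?gather + card ?output + card ?padding"
    unfolding cube_edges_def by (simp add: card_Un_disjoint Int_Un_distrib2)
  moreover have "card ?inputs = CARD('n) * M * (2 * CARD('n))"
    by (subst card_image) (auto simp: inj_on_def card_cartesian_product)
  moreover have "card ?gather = M * (2 * CARD('n) - 1)"
  proof -
    have "card (- {(j0, False)}) = 2 * CARD('n) - 1"
      by (simp add: Compl_eq_Diff_UNIV card_Diff_singleton)
    then show ?thesis by (subst card_image) (auto simp: inj_on_def card_cartesian_product)
  qed
  moreover have "card ?output = 2 * M"
    by (subst card_image) (auto simp: inj_on_def card_cartesian_product)
  moreover have "card ?padding = M - 1"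
    by (subst card_image) (auto simp: inj_on_def)
  ultimately show ?thesis by (simp only:)
qed

lemma num_weights_cube_arch:
  assumes "M \<ge> 1"
  shows "num_weights (cube_arch M j0 :: ('n::finite) arch) = 2 * (CARD('n) + 1)^2 * M"
proof -
  have "(cube_nodes M :: 'n node set) - range Inl =
        insert (Inr 0) ((\<lambda>(i, q). neuron i q) ` ({1..M} \<times> UNIV))"
    by (auto simp: cube_nodes_def)
  also have "card \<dots> = Suc (M * (2 * CARD('n)))"
    by (subst card_insert_disjoint) (auto simp: card_image inj_on_def card_cartesian_product)
  finally have nodes: "card (cube_nodes M - range Inl :: 'n node set) = Suc (M * (2 * CARD('n)))" .
  obtain d where d: "CARD('n) = Suc d" using gr0_implies_Suc[OF zero_less_card_finite] ..
  obtain M' where M': "M = Suc M'" using gr0_implies_Suc[of M] assms by auto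
  show ?thesis
    using nodes card_cube_edges[of M j0] unfolding num_weights_def cube_arch_def d M'
    by (simp add: power2_eq_square algebra_simps)
qed

locale cube_family =
  fixes M :: nat and j0 :: "'n::finite"
    and c :: "nat \<Rightarrow> real^'n" and u :: "nat \<Rightarrow> 'n \<Rightarrow> real^'n" and r :: "nat \<Rightarrow> real"
    and lo hi :: "nat \<Rightarrow> 'n \<Rightarrow> bool" and \<alpha> :: "nat \<Rightarrow> real"
  assumes M_pos: "M \<ge> 1" and r_pos: "\<And>i. i \<in> {1..M} \<Longrightarrow> 0 < r i"
begin

abbreviation "closed_face i \<equiv> face_closed (lo i) (hi i)"
abbreviation "slack i \<equiv> face_slack (c i) (u i) (r i)"
abbreviation "upper0 \<equiv> (j0, False)"
abbreviation "lower0 \<equiv> (j0, True)"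
abbreviation "other_faces \<equiv> - {upper0, lower0}"

definition penalty :: "nat \<Rightarrow> real" where
  "penalty i = 2 * r i + 1"

definition lower_penalty :: "nat \<Rightarrow> real" where
  "lower_penalty i = penalty i * card other_faces"

definition violations :: "nat \<Rightarrow> real^'n \<Rightarrow> real" where
  "violations i x = (\<Sum>q\<in>other_faces. of_bool (\<not> ineq (closed_face i q) (slack i q x)))"

definition gate_input :: "nat \<Rightarrow> real^'n \<Rightarrow> real" where
  "gate_input i x = slack i upper0 x - penalty i * violations i x
                    + lower_penalty i * of_bool (\<not> ineq (closed_face i lower0) (slack i lower0 x))"

fun weight :: "'n node \<times> 'n node \<Rightarrow> real" where
  "weight (Inl l, Inr (Suc n)) =
     (case from_nat n of (i, q) \<Rightarrow> bsign (closed_face i q) * bsign (snd q) * u i (fst q) $ l)"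
| "weight (Inr (Suc m), Inr (Suc n)) =
     (case (from_nat m, from_nat n) of ((i', q'), (i, q)) \<Rightarrow>
        if i' = i \<and> q = upper0 \<and> q' \<noteq> upper0
        then bsign (closed_face i upper0) * bsign (closed_face i q') *
               (if q' = lower0 then - lower_penalty i else penalty i)
        else 0)"
| "weight (Inr (Suc m), Inr 0) =
     (case from_nat m of (i, q) \<Rightarrow>
        if q \<in> {upper0, lower0} then \<alpha> i * bsign (closed_face i q) else 0)"
| "weight _ = 0"

fun bias :: "'n node \<Rightarrow> real" where
  "bias (Inr 0) =
     (\<Sum>i=1..M. \<alpha> i * (of_bool (\<not> closed_face i upper0) - of_bool (closed_face i lower0)))"
| "bias (Inr (Suc n)) =
     (case from_nat n of (i, q) \<Rightarrow>
        bsign (closed_face i q) * (r i - bsign (snd q) * (c i \<bullet> u i (fst q)) +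
          (if q = upper0
           then lower_penalty i * of_bool (closed_face i lower0)
                  - penalty i * (\<Sum>q'\<in>other_faces. of_bool (closed_face i q'))
           else 0)))"
| "bias (Inl _) = 0"

abbreviation "arch \<equiv> cube_arch M j0"

lemma nval_face:
  assumes "i \<in> {1..M}" "q \<noteq> upper0"
  shows "nval (Suc f) arch weight bias x (neuron i q) =
           heaviside (bsign (closed_face i q) * slack i q x)"
proof -
  have "(\<Sum>v\<in>preds arch (neuron i q). weight (v, neuron i q) * nval f arch weight bias x v) =
        (\<Sum>v\<in>range Inl. weight (v, neuron i q) * nval f arch weight bias x v)"
  proof (rule sum_preds_eq_support)
    show "range Inl \<subseteq> preds arch (neuron i q)"
      by (auto simp: mem_preds_cube_arch intro: input_edge[OF assms(1)])
    show "weight (v, neuron i q) = 0" if "v \<notin> range Inl" for v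
      using that assms(2)
      by (cases v rule: sum.exhaust; cases "projr v") (auto simp: neuron_def split: prod.split)
  qed (simp add: cube_arch_def cube_nodes_def)
  also have "\<dots> = bsign (closed_face i q) * bsign (snd q) * (u i (fst q) \<bullet> x)"
    by (simp add: sum_Inl_nval neuron_def inner_vec_def sum_distrib_left mult.assoc)
  finally show ?thesis
    using assms(2)
    by (simp add: neuron_def face_slack_def inner_diff_left inner_commute algebra_simps)
qed

lemma nval_gate:
  assumes "i \<in> {1..M}"
  shows "nval (Suc (Suc f)) arch weight bias x (neuron i upper0) =
           heaviside (bsign (closed_face i upper0) * gate_input i x)"
proof -
  let ?y = "\<lambda>v. nval (Suc f) arch weight bias x v"
  let ?w = "\<lambda>v. weight (v, neuron i upper0)"
  let ?h = "\<lambda>q. bsign (closed_face i q) * heaviside (bsign (closed_face i q) * slack i q x)"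
  have "(\<Sum>v\<in>preds arch (neuron i upper0). ?w v * ?y v) =
        (\<Sum>v\<in>range Inl \<union> neuron i ` (- {upper0}). ?w v * ?y v)"
  proof (rule sum_preds_eq_support)
    show "range Inl \<union> neuron i ` (- {upper0}) \<subseteq> preds arch (neuron i upper0)"
      by (auto simp: mem_preds_cube_arch intro: input_edge[OF assms] gather_edge[OF assms])
    show "?w v = 0" if "v \<in> fst arch" "v \<notin> range Inl \<union> neuron i ` (- {upper0})" for v
      using that by (auto simp: cube_arch_def cube_nodes_def neuron_def)
  qed (simp add: cube_arch_def cube_nodes_def)
  also have "\<dots> = (\<Sum>v\<in>range Inl. ?w v * ?y v) +
                    (\<Sum>q\<in>- {upper0}. ?w (neuron i q) * ?y (neuron i q))"
    by (subst sum.union_disjoint) (auto simp: sum.reindex inj_on_def)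
  also have "(\<Sum>v\<in>range Inl. ?w v * ?y v) = - bsign (closed_face i upper0) * (u i j0 \<bullet> x)"
    unfolding sum_Inl_nval by (simp add: neuron_def inner_vec_def sum_distrib_left mult.assoc)
  also have "(\<Sum>q\<in>- {upper0}. ?w (neuron i q) * ?y (neuron i q)) =
             bsign (closed_face i upper0) *
               (penalty i * (\<Sum>q\<in>other_faces. ?h q) - lower_penalty i * ?h lower0)"
  proof -
    have "(\<Sum>q\<in>- {upper0}. ?w (neuron i q) * ?y (neuron i q)) =
          (\<Sum>q\<in>insert lower0 other_faces.
             ?w (neuron i q) * heaviside (bsign (closed_face i q) * slack i q x))"
      by (intro sum.cong) (auto simp: nval_face[OF assms] simp del: nval.simps)
    also have "\<dots> = bsign (closed_face i upper0) *
                      (penalty i * (\<Sum>q\<in>other_faces. ?h q) - lower_penalty i * ?h lower0)"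
      by (simp add: neuron_def sum_distrib_left algebra_simps)
    finally show ?thesis .
  qed
  finally have "(\<Sum>v\<in>preds arch (neuron i upper0). ?w v * ?y v) + bias (neuron i upper0) =
                bsign (closed_face i upper0) * gate_input i x"
    by (simp add: neuron_def gate_input_def violations_def of_bool_not_ineq face_slack_def
        sum_subtractf sum_distrib_left inner_commute algebra_simps del: nval.simps)
  then show ?thesis
    by (subst nval.simps(2)) (simp add: neuron_def del: nval.simps)
qed

lemma net_output_cube_arch:
  "net_output arch weight bias x =
     (\<Sum>i=1..M. \<alpha> i * (of_bool (ineq (closed_face i upper0) (gate_input i x))
                       - of_bool (\<not> ineq (closed_face i lower0) (slack i lower0 x))))"
  (is "_ = ?rhs")
proof -
  have "2 \<le> card (cube_nodes M :: 'n node set)"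
    using card_mono[of "cube_nodes M" "{Inl j0, Inr 0}"] by (simp add: cube_nodes_def)
  then obtain f where "card (cube_nodes M :: 'n node set) = 2 + f"
    using le_Suc_ex by blast
  then have f: "card (cube_nodes M :: 'n node set) = Suc (Suc f)" by simp
  let ?y = "nval (Suc (Suc f)) arch weight bias x"
  let ?w = "\<lambda>v. weight (v, Inr 0)"
  let ?S = "(\<lambda>(i, q). neuron i q) ` ({1..M} \<times> {upper0, lower0})"
  let ?h = "\<lambda>i q a. bsign (closed_face i q) * heaviside (bsign (closed_face i q) * a)"
  have "card (fst arch) = Suc (Suc f)" by (simp add: cube_arch_def f)
  then have "net_output arch weight bias x = (\<Sum>v\<in>preds arch (Inr 0). ?w v * ?y v) + bias (Inr 0)"
    unfolding net_output_def Let_def out_node_cube_arch[OF M_pos] by (simp only:)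
  also have "(\<Sum>v\<in>preds arch (Inr 0). ?w v * ?y v) = (\<Sum>v\<in>?S. ?w v * ?y v)"
  proof (rule sum_preds_eq_support)
    show "?S \<subseteq> preds arch (Inr 0)"
      using output_edge[of _ M _ j0] by (auto simp: mem_preds_cube_arch)
    show "?w v = 0" if "v \<in> fst arch" "v \<notin> ?S" for v
      using that by (auto simp: cube_arch_def cube_nodes_def neuron_def)
  qed (simp add: cube_arch_def cube_nodes_def)
  also have "\<dots> = (\<Sum>(i, q)\<in>{1..M} \<times> {upper0, lower0}. ?w (neuron i q) * ?y (neuron i q))"
    by (simp add: sum.reindex inj_on_def case_prod_unfold del: nval.simps)
  also have "\<dots> = (\<Sum>i=1..M. \<Sum>q\<in>{upper0, lower0}. ?w (neuron i q) * ?y (neuron i q))"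
    by (rule sum.cartesian_product[symmetric])
  also have "\<dots> = (\<Sum>i=1..M. \<alpha> i * (?h i upper0 (gate_input i x) + ?h i lower0 (slack i lower0 x)))"
    by (intro sum.cong refl)
      (simp add: nval_gate nval_face del: nval.simps, simp add: neuron_def algebra_simps)
  finally have "net_output arch weight bias x =
     (\<Sum>i=1..M. \<alpha> i * (?h i upper0 (gate_input i x) + ?h i lower0 (slack i lower0 x)) +
                \<alpha> i * (of_bool (\<not> closed_face i upper0) - of_bool (closed_face i lower0)))"
    by (simp add: sum.distrib del: nval.simps)
  also have "\<dots> = ?rhs"
    by (intro sum.cong refl) (simp add: of_bool_ineq of_bool_not_ineq algebra_simps)
  finally show ?thesis .
qed

lemma gate_output_eq_indicator:
  assumes "i \<in> {1..M}"
  shows "of_bool (ineq (closed_face i upper0) (gate_input i x))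
           - of_bool (\<not> ineq (closed_face i lower0) (slack i lower0 x))
         = (indicator (cube_set (c i) (u i) (r i) (lo i) (hi i)) x :: real)"
proof -
  let ?holds = "\<lambda>q. ineq (closed_face i q) (slack i q x)"
  let ?bad = "other_faces \<inter> {q. \<not> ?holds q}"
  have V: "violations i x = real (card ?bad)" by (simp add: violations_def)
  have "card ?bad \<le> card other_faces" by (rule card_mono) auto
  then have "penalty i * violations i x \<le> lower_penalty i"
    using r_pos[OF assms] by (simp add: V penalty_def lower_penalty_def)
  moreover have "violations i x = 0 \<or> 1 \<le> violations i x"
    unfolding V by (cases "card ?bad") simp_all
  moreover have "slack i lower0 x + slack i upper0 x = 2 * r i" by (simp add: face_slack_def)
  ultimately have gate: "ineq (closed_face i upper0) (gate_input i x) \<longleftrightarrow>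
                         \<not> ?holds lower0 \<or> (violations i x = 0 \<and> ?holds upper0)"
    using r_pos[OF assms] unfolding gate_input_def by (intro ineq_gate_iff) (auto simp: penalty_def)
  have "violations i x = 0 \<longleftrightarrow> (\<forall>q\<in>other_faces. ?holds q)"
    using finite[of ?bad] unfolding V of_nat_eq_0_iff card_eq_0_iff by blast
  moreover have "(\<forall>q. P q) \<longleftrightarrow> P upper0 \<and> P lower0 \<and> (\<forall>q\<in>other_faces. P q)" for P
    by auto
  ultimately have "x \<in> cube_set (c i) (u i) (r i) (lo i) (hi i) \<longleftrightarrow>
                   ?holds upper0 \<and> ?holds lower0 \<and> violations i x = 0"
    by (simp add: mem_cube_set_iff)
  then show ?thesis using gate by (auto simp: indicator_def)
qed

lemma sum_cube_indicators_in_hclass: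
  "(\<lambda>x. \<Sum>i=1..M. \<alpha> i * indicator (cube_set (c i) (u i) (r i) (lo i) (hi i)) x) \<in> hclass arch"
  unfolding hclass_def
proof (intro CollectI exI allI)
  fix x
  show "(\<Sum>i=1..M. \<alpha> i * indicator (cube_set (c i) (u i) (r i) (lo i) (hi i)) x) =
        net_output arch weight bias x"
    by (simp add: net_output_cube_arch gate_output_eq_indicator)
qed

end


theorem proposition10:
  fixes M :: nat
  assumes "M \<ge> 1"
  shows "\<exists>A :: ('n::finite) arch.
           valid_arch A \<and> num_hidden_layers A = 2 \<and>
           num_weights A = 2 * (CARD('n) + 1)^2 * M \<and>
           (\<forall>(\<alpha>::nat \<Rightarrow> real) (C::nat \<Rightarrow> (real^'n) set).
              (\<forall>i\<in>{1..M}. hypercube (C i)) \<and>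
              (\<forall>i\<in>{1..M}. \<forall>j\<in>{1..M}. i \<noteq> j \<longrightarrow> C i \<inter> C j = {}) \<longrightarrow>
              (\<lambda>x. \<Sum>i=1..M. \<alpha> i * indicator (C i) x) \<in> hclass A)"
proof (intro exI[of _ "cube_arch M undefined"] conjI allI impI)
  fix \<alpha> :: "nat \<Rightarrow> real" and C :: "nat \<Rightarrow> (real^'n) set"
  assume cubes: "(\<forall>i\<in>{1..M}. hypercube (C i)) \<and> (\<forall>i\<in>{1..M}. \<forall>j\<in>{1..M}. i \<noteq> j \<longrightarrow> C i \<inter> C j = {})"
  obtain c u r lo hi
    where C: "\<forall>i\<in>{1..M}. 0 < r i \<and> C i = cube_set (c i) (u i) (r i) (lo i) (hi i)"
    using hypercube_family_imp_cube_sets[OF conjunct1[OF cubes]] by blast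
  interpret cube_family M undefined c u r lo hi \<alpha>
    using assms C by unfold_locales auto
  have C_eq: "(\<lambda>x. \<Sum>i=1..M. \<alpha> i * indicator (C i) x) =
        (\<lambda>x. \<Sum>i=1..M. \<alpha> i * indicator (cube_set (c i) (u i) (r i) (lo i) (hi i)) x)"
    using C by (intro ext sum.cong) auto
  show "(\<lambda>x. \<Sum>i=1..M. \<alpha> i * indicator (C i) x) \<in> hclass (cube_arch M undefined)"
    unfolding C_eq by (rule sum_cube_indicators_in_hclass)
qed (rule valid_cube_arch[OF assms] num_hidden_layers_cube_arch[OF assms]
          num_weights_cube_arch[OF assms])+

end
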